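(* Let $m\geq 2$ and let $f=a_0+a_1z+\cdots+a_mz^m\in\mathbb{Z}[z]$ be a primitive polynomial with $a_0a_m\neq 0$. Let $b$ be a positive divisor of $a_m$ and $\delta$ a real number with $1/b\leq\delta\leq 1$, and suppose there is an index $j$ with $0\leq j\leq m-1$ such that $$|a_j|>\sum_{0\leq i<j}|a_i||a_m|^{j-i}+\sum_{j<i\leq m}|a_i|\delta^{i-j},$$ where an empty sum is $0$. Then $f$ is a product of at most $m-j$ irreducible polynomials in $\mathbb{Z}[z]$. In particular, if $j=m-1$, then $f$ is irreducible in $\mathbb{Z}[z]$.
   Context: A polynomial in $\mathbb{Z}[z]$ is primitive if the greatest common divisor of its coefficients is $1$. "$f$ is a product of at most $r$ irreducible polynomials" means that in a factorization of $f$ into irreducible elements of $\mathbb{Z}[z]$, the number of factors (counted with multiplicity) is at most $r$. *)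

theory Defs
  imports Complex_Main "HOL-Computational_Algebra.Polynomial_Factorial"
begin

end

theory Submission
  imports "HOL-Complex_Analysis.Complex_Analysis" "HOL-Computational_Algebra.Fundamental_Theorem_Algebra" Defs
begin

text \<open>
  Put \<open>r = 1 / \<bar>a\<^sub>m\<bar>\<close>. Since \<open>r \<le> \<delta>\<close>, the hypothesis makes the term \<open>a\<^sub>j z\<^sup>j\<close> dominate the
  rest of \<open>f(z)\<close> on the circle \<open>\<bar>z\<bar> = r\<close>, so by Rouche's theorem \<open>f\<close> has exactly \<open>j\<close> roots
  in the open disc of radius \<open>r\<close> and \<open>m - j\<close> roots outside it. An irreducible factor \<open>p\<close> of
  the primitive polynomial \<open>f\<close> is nonconstant, has \<open>p(0) \<noteq> 0\<close> and \<open>\<bar>lc p\<bar> \<le> \<bar>a\<^sub>m\<bar>\<close>; if all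
  its roots lay inside the disc, then \<open>1 \<le> \<bar>p(0)\<bar> = \<bar>lc p\<bar> \<Prod> \<bar>\<zeta>\<bar> < \<bar>lc p\<bar> r \<le> 1\<close>. So every
  irreducible factor takes at least one of the \<open>m - j\<close> outer roots.
\<close>

lemma zorder_poly:
  fixes p :: "complex poly"
  assumes "p \<noteq> 0"
  shows "zorder (poly p) z = int (order z p)"
proof -
  obtain q where q: "p = [:-z, 1:] ^ order z p * q" "\<not> [:-z, 1:] dvd q"
    using order_decomp[OF assms] by blast
  show ?thesis
  proof (rule zorder_eqI[of UNIV z "poly q"])
    show "poly q z \<noteq> 0" using q(2) by (simp add: poly_eq_0_iff_dvd)
    fix w
    have "poly p w = poly q w * (w - z) ^ order z p"
      by (subst q(1)) (simp add: poly_power)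
    then show "poly p w = poly q w * (w - z) powi int (order z p)"
      by (simp add: power_int_of_nat)
  qed (auto intro!: holomorphic_intros)
qed

lemma zorder_monom:
  fixes c :: complex
  assumes "c \<noteq> 0"
  shows "zorder (\<lambda>z. c * z ^ k) 0 = int k"
  by (rule zorder_eqI[of UNIV 0 "\<lambda>_. c"]) (auto simp: assms power_int_of_nat)

lemma size_filter_mset_proots:
  fixes p :: "'a :: idom poly"
  assumes "p \<noteq> 0"
  shows "size (filter_mset Q (proots p)) = (\<Sum>z\<in>{z. poly p z = 0 \<and> Q z}. order z p)"
proof -
  have "set_mset (filter_mset Q (proots p)) = {z. poly p z = 0 \<and> Q z}"
    using assms by auto
  then show ?thesis
    using assms by (simp add: size_multiset_overloaded_eq)
qed

lemma winding_number_circlepath_off_circle: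
  assumes "r > 0" and "norm (w - a) \<noteq> r"
  shows "winding_number (circlepath a r) w = (if norm (w - a) < r then 1 else 0)"
proof (cases "norm (w - a) < r")
  case False
  with assms have "w \<notin> cball a r" by (simp add: dist_norm norm_minus_commute)
  moreover have "path_image (circlepath a r) \<subseteq> cball a r"
    using assms(1) by (auto simp: path_image_circlepath_nonneg)
  ultimately show ?thesis
    using False by (simp add: winding_number_zero_outside[of _ "cball a r"])
qed (simp add: winding_number_circlepath)

lemma size_proots_in_disc_Rouche:
  fixes p :: "complex poly" and c :: complex
  assumes p: "p \<noteq> 0" and r: "r > 0" and c: "c \<noteq> 0"
    and dominant: "\<And>z. cmod z = r \<Longrightarrow> cmod (poly p z - c * z ^ k) < cmod (c * z ^ k)"
  shows "size (filter_mset (\<lambda>z. cmod z < r) (proots p)) = k"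
proof -
  define \<gamma> where "\<gamma> = circlepath 0 r"
  have image_\<gamma>: "path_image \<gamma> = sphere 0 r"
    using r by (simp add: \<gamma>_def path_image_circlepath_nonneg)
  have Rouche:
    "(\<Sum>z | z \<in> UNIV \<and> c * z ^ k + (poly p z - c * z ^ k) = 0.
        winding_number \<gamma> z * of_int (zorder (\<lambda>z. c * z ^ k + (poly p z - c * z ^ k)) z))
     = (\<Sum>z | z \<in> UNIV \<and> c * z ^ k = 0. winding_number \<gamma> z * of_int (zorder (\<lambda>z. c * z ^ k) z))"
    using poly_roots_finite[OF p] dominant r
    by (intro Rouche_theorem) (auto simp: \<gamma>_def image_\<gamma> c intro!: holomorphic_intros)
  have "winding_number \<gamma> z = (if cmod z < r then 1 else 0)" if "poly p z = 0" for z
  proof -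
    have "cmod z \<noteq> r" using dominant[of z] that by auto
    then show ?thesis using winding_number_circlepath_off_circle[of r z 0] r by (simp add: \<gamma>_def)
  qed
  then have "(\<Sum>z | z \<in> UNIV \<and> c * z ^ k + (poly p z - c * z ^ k) = 0.
        winding_number \<gamma> z * of_int (zorder (\<lambda>z. c * z ^ k + (poly p z - c * z ^ k)) z))
      = (\<Sum>z\<in>{z. poly p z = 0}. if cmod z < r then of_nat (order z p) else 0)"
    by (intro sum.cong) (auto simp: zorder_poly[OF p])
  also have "\<dots> = of_nat (size (filter_mset (\<lambda>z. cmod z < r) (proots p)))"
    by (simp add: size_filter_mset_proots[OF p] sum.inter_filter[symmetric] poly_roots_finite[OF p]
        conj_commute)
  finally have "of_nat (size (filter_mset (\<lambda>z. cmod z < r) (proots p)))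
      = (\<Sum>z | c * z ^ k = 0. winding_number \<gamma> z * of_int (zorder (\<lambda>z. c * z ^ k) z))"
    using Rouche by simp
  also have "\<dots> = of_nat k"
  proof (cases "k = 0")
    case False
    then have "{z. c * z ^ k = 0} = {0}" by (auto simp: c)
    then show ?thesis
      using r by (simp add: zorder_monom[OF c] \<gamma>_def winding_number_circlepath_centre)
  qed (simp add: c)
  finally show ?thesis by (simp only: of_nat_eq_iff)
qed

lemma dominant_coeff_on_circle:
  fixes p :: "complex poly" and z :: complex
  assumes "degree p \<le> m" and "j \<le> m"
    and r: "r > 0" "r * M = 1" "r \<le> \<delta>" and z: "cmod z = r"
    and dominant: "cmod (coeff p j) >
           (\<Sum>i<j. cmod (coeff p i) * M ^ (j - i)) + (\<Sum>i\<in>{j<..m}. cmod (coeff p i) * \<delta> ^ (i - j))"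
  shows "cmod (poly p z - coeff p j * z ^ j) < cmod (coeff p j * z ^ j)"
proof -
  define t where "t i = coeff p i * z ^ i" for i
  have norm_t: "cmod (t i) = cmod (coeff p i) * r ^ i" for i
    by (simp add: t_def norm_mult norm_power z)
  have "poly p z = (\<Sum>i\<le>m. t i)"
    unfolding poly_altdef t_def using assms(1)
    by (intro sum.mono_neutral_left) (auto simp: coeff_eq_0)
  also have "{..m} = {..<j} \<union> insert j {j<..m}" using assms(2) by auto
  also have "(\<Sum>i\<in>{..<j} \<union> insert j {j<..m}. t i) = (\<Sum>i<j. t i) + (t j + (\<Sum>i\<in>{j<..m}. t i))"
    by (subst sum.union_disjoint) auto
  finally have "poly p z - t j = (\<Sum>i<j. t i) + (\<Sum>i\<in>{j<..m}. t i)"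
    by simp
  have lower: "cmod (t i) = r ^ j * (cmod (coeff p i) * M ^ (j - i))" if "i < j" for i
  proof -
    have "r ^ j * M ^ (j - i) = r ^ i * (r * M) ^ (j - i)"
      using that by (simp add: power_mult_distrib flip: power_add)
    then show ?thesis using r by (simp add: norm_t)
  qed
  have upper: "cmod (t i) \<le> r ^ j * (cmod (coeff p i) * \<delta> ^ (i - j))" if "j < i" for i
  proof -
    have "r ^ i = r ^ j * r ^ (i - j)" using that by (simp flip: power_add)
    also have "\<dots> \<le> r ^ j * \<delta> ^ (i - j)" using r by (intro mult_left_mono power_mono) auto
    finally have "cmod (coeff p i) * r ^ i \<le> cmod (coeff p i) * (r ^ j * \<delta> ^ (i - j))"
      by (rule mult_left_mono) simp
    then show ?thesis by (simp add: norm_t mult_ac)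
  qed
  have "cmod (poly p z - t j) \<le> (\<Sum>i<j. cmod (t i)) + (\<Sum>i\<in>{j<..m}. cmod (t i))"
    unfolding \<open>poly p z - t j = _\<close> by (intro order.trans[OF norm_triangle_ineq] add_mono norm_sum)
  also have "\<dots> \<le> r ^ j * ((\<Sum>i<j. cmod (coeff p i) * M ^ (j - i))
                         + (\<Sum>i\<in>{j<..m}. cmod (coeff p i) * \<delta> ^ (i - j)))"
    unfolding distrib_left sum_distrib_left using lower upper by (intro add_mono sum_mono) auto
  also have "\<dots> < r ^ j * cmod (coeff p j)"
    using dominant r by (intro mult_strict_left_mono) auto
  also have "\<dots> = cmod (t j)" by (simp add: norm_t mult.commute)
  finally show ?thesis by (simp only: t_def)
qed

lemma size_proots_outside_disc:
  fixes p :: "complex poly"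
  assumes "degree p = m" and "j \<le> m"
    and r: "r > 0" "r * M = 1" "r \<le> \<delta>"
    and dominant: "cmod (coeff p j) >
           (\<Sum>i<j. cmod (coeff p i) * M ^ (j - i)) + (\<Sum>i\<in>{j<..m}. cmod (coeff p i) * \<delta> ^ (i - j))"
  shows "size (filter_mset (\<lambda>z. r \<le> cmod z) (proots p)) = m - j"
proof -
  have "M > 0" using r by (metis zero_less_mult_pos zero_less_one)
  then have "0 \<le> (\<Sum>i<j. cmod (coeff p i) * M ^ (j - i)) + (\<Sum>i\<in>{j<..m}. cmod (coeff p i) * \<delta> ^ (i - j))"
    using r by (intro add_nonneg_nonneg sum_nonneg) auto
  then have "coeff p j \<noteq> 0" using dominant by auto
  then have "p \<noteq> 0" by auto
  have inner: "size (filter_mset (\<lambda>z. cmod z < r) (proots p)) = j"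
  proof (rule size_proots_in_disc_Rouche[where c = "coeff p j"])
    fix z :: complex assume "cmod z = r"
    then show "cmod (poly p z - coeff p j * z ^ j) < cmod (coeff p j * z ^ j)"
      using assms by (intro dominant_coeff_on_circle[of p m j r M \<delta>]) auto
  qed (use r \<open>coeff p j \<noteq> 0\<close> \<open>p \<noteq> 0\<close> in auto)
  have "proots p = filter_mset (\<lambda>z. cmod z < r) (proots p) + filter_mset (\<lambda>z. r \<le> cmod z) (proots p)"
    using multiset_partition[of "proots p" "\<lambda>z. cmod z < r"] by (simp add: not_less)
  then show ?thesis
    using inner assms(1) by (metis add_diff_cancel_left' size_proots_complex size_union)
qed

lemma size_le_size_filter_mset_proots_prod_mset:
  fixes P :: "'a :: idom poly multiset"
  assumes "\<And>p. p \<in># P \<Longrightarrow> p \<noteq> 0 \<and> (\<exists>z. poly p z = 0 \<and> Q z)"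
  shows "size P \<le> size (filter_mset Q (proots (prod_mset P)))"
  using assms
proof (induction P)
  case (add p P)
  obtain z where "poly p z = 0" "Q z" "p \<noteq> 0" using add.prems by auto
  then have "z \<in># filter_mset Q (proots p)" by simp
  then have "1 \<le> size (filter_mset Q (proots p))"
    by (cases "filter_mset Q (proots p)") auto
  moreover have "prod_mset P \<noteq> 0" using add.prems by (auto simp: prod_mset_zero_iff)
  ultimately show ?case
    using add by (simp add: proots_mult)
qed simp

lemma map_poly_of_int_mult:
  "map_poly (of_int :: int \<Rightarrow> 'a :: comm_ring_1) (p * q) = map_poly of_int p * map_poly of_int q"
  by (intro poly_eqI) (simp add: coeff_mult coeff_map_poly)

lemma map_poly_of_int_prod_mset:
  "map_poly (of_int :: int \<Rightarrow> 'a :: comm_ring_1) (prod_mset P) = prod_mset (image_mset (map_poly of_int) P)"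
  by (induction P) (simp_all add: map_poly_of_int_mult)

lemma irreducible_factorization_exists:
  fixes f :: "'a :: factorial_semiring"
  assumes "f \<noteq> 0" and "\<not> is_unit f"
  obtains P where "\<forall>p\<in>#P. irreducible p" and "prod_mset P = f"
proof -
  define A where "A = prime_factorization f"
  have "normalize f = normalize (prod_mset A)"
    using prod_mset_prime_factorization_weak[OF assms(1)] by (simp add: A_def)
  then obtain u where u: "is_unit u" and fu: "f = u * prod_mset A"
    by (blast elim: associatedE1)
  with assms(2) have "A \<noteq> {#}" by auto
  then obtain p where p: "p \<in># A" by blast
  have irr: "irreducible q" if "q \<in># A" for q
    using that by (auto simp: A_def intro: prime_elem_imp_irreducible prime_imp_prime_elem in_prime_factors_imp_prime)
  show ?thesis
  proof
    show "\<forall>q\<in>#add_mset (u * p) (A - {#p#}). irreducible q"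
      using irr p u by (auto simp: irreducible_mult_unit_left dest: in_diffD)
    have "prod_mset A = p * prod_mset (A - {#p#})"
      by (subst insert_DiffM[OF p, symmetric]) simp
    then show "prod_mset (add_mset (u * p) (A - {#p#})) = f"
      using fu by (simp add: mult.assoc)
  qed
qed

lemma degree_pos_of_dvd_primitive:
  fixes f p :: "'a :: {factorial_ring_gcd, semiring_gcd_mult_normalize} poly"
  assumes "content f = 1" and "p dvd f" and "\<not> is_unit p"
  shows "degree p > 0"
proof (rule ccontr)
  assume "\<not> degree p > 0"
  then have p: "p = [:coeff p 0:]" by (simp add: degree_0_id)
  have "is_unit (content p)" using content_dvd_contentI[OF assms(2)] assms(1) by simp
  then have "is_unit (coeff p 0)" by (subst (asm) p) (simp only: content_const normalize_dvd_iff)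
  then show False using assms(3) by (subst (asm) p) (simp add: is_unit_const_poly_iff)
qed

lemma int_poly_has_root_outside_disc:
  fixes p :: "int poly" and r :: real
  assumes "degree p > 0" and "coeff p 0 \<noteq> 0" and "r \<le> 1" and "\<bar>lead_coeff p\<bar> * r \<le> 1"
  shows "\<exists>z. poly (map_poly of_int p) z = 0 \<and> r \<le> cmod z"
proof (rule ccontr)
  assume no_root: "\<not> ?thesis"
  define d where "d = degree p"
  define q where "q = map_poly (of_int :: int \<Rightarrow> complex) p"
  have d: "degree q = d" by (simp add: q_def d_def degree_map_poly)
  have lead: "lead_coeff q = of_int (lead_coeff p)" by (simp add: q_def d_def degree_map_poly coeff_map_poly)
  obtain root where root: "smult (lead_coeff q) (\<Prod>i<degree q. [:-root i, 1:]) = q"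
    using complex_poly_decompose' by blast
  have small: "cmod (root i) < r" if "i < d" for i
  proof -
    have "poly q (root i) = 0"
      using that by (subst root[symmetric]) (auto simp: poly_prod d)
    then show ?thesis using no_root by (auto simp: q_def not_le)
  qed
  have "0 < r"
    using small[of 0] assms(1) by (auto simp: d_def intro: le_less_trans[OF norm_ge_zero])
  then have "(\<Prod>i<d. cmod (root i)) < (\<Prod>i<d. r)"
    using small assms(1) by (intro prod_mono_strict[of 0]) (auto simp: d_def less_imp_le)
  then have roots: "(\<Prod>i<d. cmod (root i)) < r ^ d" by simp
  have "poly q 0 = lead_coeff q * (\<Prod>i<d. - root i)"
    by (subst root[symmetric]) (simp add: poly_prod d)
  then have "cmod (poly q 0) = \<bar>of_int (lead_coeff p)\<bar> * (\<Prod>i<d. cmod (root i))"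
    by (simp add: lead norm_mult flip: prod_norm)
  also have "\<dots> < \<bar>of_int (lead_coeff p)\<bar> * r ^ d"
    using roots assms(1) by (intro mult_strict_left_mono) (auto simp: d_def)
  also have "\<dots> \<le> \<bar>of_int (lead_coeff p)\<bar> * r"
    using roots assms(1,3) \<open>0 < r\<close> prod_nonneg[of "{..<d}" "\<lambda>i. cmod (root i)"]
    by (intro mult_left_mono power_decreasing[of 1 d r, simplified]) (auto simp: d_def)
  also have "\<dots> \<le> \<bar>of_int (coeff p 0)\<bar>"
    using assms(2,4) by linarith
  also have "\<dots> = cmod (poly q 0)" by (simp add: q_def poly_0_coeff_0 coeff_map_poly)
  finally show False by simp
qed

lemma irreducible_factor_has_root_outside_disc:
  fixes f p :: "int poly" and r :: real
  assumes "content f = 1" and "coeff f 0 \<noteq> 0" and "p dvd f" and "irreducible p"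
    and "r > 0" and "r * \<bar>lead_coeff f\<bar> \<le> 1"
  shows "\<exists>z. poly (map_poly of_int p) z = 0 \<and> r \<le> cmod z"
proof (rule int_poly_has_root_outside_disc)
  obtain q where f: "f = p * q" using assms(3) by blast
  have "p \<noteq> 0" "q \<noteq> 0" using assms(2) f by auto
  then have "1 \<le> \<bar>lead_coeff p\<bar>" and "\<bar>lead_coeff p\<bar> \<le> \<bar>lead_coeff f\<bar>"
    by (simp_all add: f lead_coeff_mult abs_mult mult_le_cancel_left1 int_one_le_iff_zero_less)
  then have "1 * r \<le> \<bar>lead_coeff p\<bar> * r" and "\<bar>lead_coeff p\<bar> * r \<le> \<bar>lead_coeff f\<bar> * r"
    using assms(5) by (intro mult_right_mono; simp)+
  then show "\<bar>lead_coeff p\<bar> * r \<le> 1" and "r \<le> 1"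
    using assms(6) by (simp_all add: mult.commute)
  show "degree p > 0"
    using assms by (intro degree_pos_of_dvd_primitive[of f]) (auto dest: irreducible_not_unit)
  show "coeff p 0 \<noteq> 0" using assms(2) f by (simp add: coeff_mult_0)
qed

lemma size_irreducible_factorization_le:
  fixes f :: "int poly" and P :: "int poly multiset" and r :: real
  assumes "content f = 1" and "coeff f 0 \<noteq> 0"
    and "r > 0" and "r * \<bar>lead_coeff f\<bar> \<le> 1"
    and P: "\<forall>p\<in>#P. irreducible p" "prod_mset P = f"
  shows "size P \<le> size (filter_mset (\<lambda>z. r \<le> cmod z) (proots (map_poly of_int f)))"
proof -
  have "\<exists>z. poly (map_poly of_int p) z = 0 \<and> r \<le> cmod z" if "p \<in># P" for p
    using that assms by (intro irreducible_factor_has_root_outside_disc[of f]) (auto intro: dvd_prod_mset)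
  then have "size (image_mset (map_poly (of_int :: int \<Rightarrow> complex)) P)
      \<le> size (filter_mset (\<lambda>z. r \<le> cmod z) (proots (prod_mset (image_mset (map_poly of_int) P))))"
    using P by (intro size_le_size_filter_mset_proots_prod_mset) (auto simp: map_poly_eq_0_iff)
  then show ?thesis
    unfolding P(2)[symmetric] map_poly_of_int_prod_mset by simp
qed

theorem theorem4:
  fixes f :: "int poly" and m j :: nat and b :: int and \<delta> :: real
  assumes "m \<ge> 2"
    and "degree f = m"
    and "content f = 1"
    and "coeff f 0 * coeff f m \<noteq> 0"
    and "b > 0" and "b dvd coeff f m"
    and "1 / real_of_int b \<le> \<delta>" and "\<delta> \<le> 1"
    and "j \<le> m - 1"
    and "real_of_int \<bar>coeff f j\<bar> >
           (\<Sum>i<j. real_of_int (\<bar>coeff f i\<bar> * \<bar>coeff f m\<bar> ^ (j - i)))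
         + (\<Sum>i\<in>{j<..m}. real_of_int \<bar>coeff f i\<bar> * \<delta> ^ (i - j))"
  shows "(\<exists>P :: int poly multiset. (\<forall>p\<in>#P. irreducible p) \<and> prod_mset P = f
             \<and> size P \<le> m - j)
         \<and> (j = m - 1 \<longrightarrow> irreducible f)"
proof -
  define F where "F = map_poly (of_int :: int \<Rightarrow> complex) f"
  define r where "r = 1 / \<bar>real_of_int (coeff f m)\<bar>"
  have f: "f \<noteq> 0" "coeff f 0 \<noteq> 0" "coeff f m \<noteq> 0" using assms(4) by auto
  have r: "r > 0" "r * \<bar>real_of_int (coeff f m)\<bar> = 1" using f by (simp_all add: r_def)
  have "b \<le> \<bar>coeff f m\<bar>" using dvd_imp_le_int[OF f(3) assms(6)] by simp
  then have "r \<le> 1 / real_of_int b"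
    unfolding r_def using assms(5) by (intro divide_left_mono) auto
  then have "r \<le> \<delta>" using assms(7) by linarith
  then have outer: "size (filter_mset (\<lambda>z. r \<le> cmod z) (proots F)) = m - j"
    using assms(2,9,10) r
    by (intro size_proots_outside_disc[where M = "\<bar>of_int (coeff f m)\<bar>"])
       (simp_all add: F_def degree_map_poly coeff_map_poly)
  have "\<not> is_unit f" using assms(1,2) by (auto simp: is_unit_poly_iff)
  then obtain P where P: "\<forall>p\<in>#P. irreducible p" "prod_mset P = f"
    using irreducible_factorization_exists f(1) by blast
  then have size: "size P \<le> m - j"
    using size_irreducible_factorization_le[of f r P] outer assms(2,3) f r by (simp add: F_def)
  moreover have "irreducible f" if "j = m - 1"
  proof -
    have "size P = 1" using size that assms(1) P \<open>\<not> is_unit f\<close> by (cases P) auto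
    then obtain p where "P = {#p#}" using size_1_singleton_mset by blast
    then show ?thesis using P by auto
  qed
  ultimately show ?thesis using P by blast
qed

end
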